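(* Let $\Psi$ be a uniformly random potential on $[K]\times[K]$, let $W_K$ be its number of pure Nash equilibria and $\eta_{W_K}$ the pure Nash equilibrium with the largest potential. Then for every $\delta>0$, \[ \lim_{K\to\infty}\mathbb{P}\left(\frac{\Psi(\eta_{W_K})}{K\log K}<1+\delta\right)=1. \]
   Context: For an integer $K\ge2$ let $[K]=\{1,\dots,K\}$. A potential is a bijection $\Psi:[K]\times[K]\to[K^2]$, representing a two-player game where player A chooses the row, player B the column, and lower potential is better; a uniformly random potential is a uniformly random such bijection. A pure Nash equilibrium is a profile $(a^*,b^* )$ with $\Psi(a^*,b^* )\le\Psi(a,b^* )$ for all $a\in[K]$ and $\Psi(a^*,b^* )\le\Psi(a^*,b)$ for all $b\in[K]$ (i.e. its value is the minimum of its row and of its column). Pure Nash equilibria are ordered by increasing potential $\eta_1,\dots,\eta_{W_K}$. *)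

theory Defs
  imports "HOL-Probability.Probability"
begin

text \<open>Potentials on [K] x [K]: bijections onto [K^2], extensional (undefined outside the grid)
  so that the set of potentials is finite and the uniform distribution is pmf_of_set.\<close>

definition grid :: "nat \<Rightarrow> (nat \<times> nat) set" where
  "grid K = {1..K} \<times> {1..K}"

definition potentials :: "nat \<Rightarrow> (nat \<times> nat \<Rightarrow> nat) set" where
  "potentials K = {\<Psi>. bij_betw \<Psi> (grid K) {1..K^2} \<and> \<Psi> \<in> extensional (grid K)}"

definition is_PNE :: "nat \<Rightarrow> (nat \<times> nat \<Rightarrow> nat) \<Rightarrow> nat \<times> nat \<Rightarrow> bool" where
  "is_PNE K \<Psi> p \<longleftrightarrow> p \<in> grid K \<and>
     (\<forall>a\<in>{1..K}. \<Psi> p \<le> \<Psi> (a, snd p)) \<and>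
     (\<forall>b\<in>{1..K}. \<Psi> p \<le> \<Psi> (fst p, b))"

definition max_PNE_potential :: "nat \<Rightarrow> (nat \<times> nat \<Rightarrow> nat) \<Rightarrow> nat" where
  "max_PNE_potential K \<Psi> = Max (\<Psi> ` {p. is_PNE K \<Psi> p})"

definition random_potential :: "nat \<Rightarrow> (nat \<times> nat \<Rightarrow> nat) pmf" where
  "random_potential K = pmf_of_set (potentials K)"

end

theory Submission
  imports Defs
begin

(* If the largest equilibrium potential is at least c, then the equilibrium p attaining it is
   the minimum of its row and of its column, so all 2K - 1 cells of the cross through p carry
   potentials in [c, K^2]. The image of a fixed s-set under a uniformly random bijection is a
   uniformly random s-set, so this has probability C(t, s) / C(K^2, s) <= (t / K^2)^s with
   t <= K^2 + 1 - c, which is at most exp(-(c - 1)(2K - 1) / K^2). A union bound over the K^2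
   crosses gives K^2 exp(-(2 + 2 delta) log K + O(1)) -> 0 for c = (1 + delta) K log K. *)

lemma Suc_times_binomial_Suc: "Suc k * (n choose Suc k) = (n - k) * (n choose k)"
  using binomial_absorption[of k n] binomial_absorb_comp[of n k] by simp

lemma binomial_mult_power_le:
  assumes "t \<le> N"
  shows "real (t choose s) * real N ^ s \<le> real t ^ s * real (N choose s)"
proof (induction s)
  case 0
  then show ?case by simp
next
  case (Suc s)
  have factor_le: "real (t - s) * real N \<le> real t * real (N - s)"
  proof (cases "s \<le> t")
    case True
    have "real s * real t \<le> real s * real N" using assms by (simp add: mult_left_mono)
    with True assms show ?thesis by (simp add: of_nat_diff algebra_simps)
  qed simp
  have "real (Suc s) * (real (t choose Suc s) * real N ^ Suc s)
      = real (Suc s * (t choose Suc s)) * (real N * real N ^ s)"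
    by (simp only: of_nat_mult power_Suc mult_ac)
  also have "\<dots> = (real (t - s) * real N) * (real (t choose s) * real N ^ s)"
    by (simp only: Suc_times_binomial_Suc of_nat_mult mult_ac)
  also have "\<dots> \<le> (real t * real (N - s)) * (real t ^ s * real (N choose s))"
    by (intro mult_mono Suc.IH factor_le) auto
  also have "\<dots> = real ((N - s) * (N choose s)) * (real t * real t ^ s)"
    by (simp only: of_nat_mult mult_ac)
  also have "\<dots> = real (Suc s) * (real t ^ Suc s * real (N choose Suc s))"
    unfolding Suc_times_binomial_Suc[symmetric] by (simp only: of_nat_mult power_Suc mult_ac)
  finally show ?case by (simp only: mult_le_cancel_left_pos of_nat_0_less_iff zero_less_Suc)
qed

lemma binomial_ratio_le_power:
  assumes "t \<le> N" "s \<le> N"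
  shows "real (t choose s) / real (N choose s) \<le> (real t / real N) ^ s"
proof (cases "N = 0")
  case True
  then show ?thesis using assms by simp
next
  case False
  then show ?thesis
    using binomial_mult_power_le[OF assms(1), of s] assms(2)
    by (simp add: field_simps power_divide)
qed

definition bijections :: "'a set \<Rightarrow> 'b set \<Rightarrow> ('a \<Rightarrow> 'b) set" where
  "bijections A B = {f \<in> extensional A. bij_betw f A B}"

lemma finite_bijections:
  assumes "finite A" "finite B"
  shows "finite (bijections A B)"
proof (rule finite_subset)
  show "bijections A B \<subseteq> A \<rightarrow>\<^sub>E B"
    by (auto simp: bijections_def bij_betw_def PiE_iff extensional_def)
  show "finite (A \<rightarrow>\<^sub>E B)"
    using assms by (rule finite_PiE)
qed

lemma bijections_nonempty:
  assumes "finite A" "finite B" "card A = card B"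
  shows "bijections A B \<noteq> {}"
proof -
  obtain h where "bij_betw h A B"
    using assms finite_same_card_bij by blast
  then have "restrict h A \<in> bijections A B"
    by (simp add: bijections_def bij_betw_cong[of A "restrict h A" h])
  then show ?thesis by blast
qed

lemma card_image_bijection:
  assumes "f \<in> bijections A B" "S \<subseteq> A"
  shows "f ` S \<subseteq> B" "card (f ` S) = card S"
  using assms by (auto simp: bijections_def bij_betw_def intro: card_image inj_on_subset)

lemma ex_permutation_image_eq:
  assumes "finite A" "U \<subseteq> A" "U' \<subseteq> A" "card U = card U'"
  shows "\<exists>\<sigma>. bij_betw \<sigma> A A \<and> \<sigma> ` U = U'"
proof -
  have finite: "finite U" "finite U'" "finite (A - U)" "finite (A - U')"
    using assms finite_subset by auto
  obtain f where f: "bij_betw f U U'"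
    using finite_same_card_bij finite assms(4) by blast
  have "card (A - U) = card (A - U')"
    using assms finite by (simp add: card_Diff_subset)
  then obtain g where g: "bij_betw g (A - U) (A - U')"
    using finite_same_card_bij finite by blast
  define \<sigma> where "\<sigma> x = (if x \<in> U then f x else g x)" for x
  have "bij_betw \<sigma> U U'"
    using f by (simp add: \<sigma>_def cong: bij_betw_cong)
  moreover have "bij_betw \<sigma> (A - U) (A - U') \<longleftrightarrow> bij_betw g (A - U) (A - U')"
    by (rule bij_betw_cong) (simp add: \<sigma>_def)
  with g have "bij_betw \<sigma> (A - U) (A - U')" by simp
  ultimately have "bij_betw \<sigma> (U \<union> (A - U)) (U' \<union> (A - U'))"
    by (rule bij_betw_combine) blast
  moreover have "U \<union> (A - U) = A" "U' \<union> (A - U') = A"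
    using assms by blast+
  moreover have "\<sigma> ` U = U'"
    using \<open>bij_betw \<sigma> U U'\<close> by (simp add: bij_betw_def)
  ultimately show ?thesis by auto
qed

lemma card_bijections_image_le:
  assumes "finite A" "finite B" "S \<subseteq> A" "U \<subseteq> B" "U' \<subseteq> B" "card U = card U'"
  shows "card {f \<in> bijections A B. f ` S = U} \<le> card {f \<in> bijections A B. f ` S = U'}"
proof -
  obtain \<sigma> where \<sigma>: "bij_betw \<sigma> B B" "\<sigma> ` U = U'"
    using ex_permutation_image_eq[OF assms(2,4-6)] by blast
  define F where "F f = restrict (\<sigma> \<circ> f) A" for f :: "'a \<Rightarrow> 'b"
  have "F f \<in> {f \<in> bijections A B. f ` S = U'}" if f: "f \<in> {f \<in> bijections A B. f ` S = U}" for f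
  proof -
    have "bij_betw (\<sigma> \<circ> f) A B"
      using f \<sigma>(1) by (auto simp: bijections_def intro: bij_betw_trans)
    then have "F f \<in> bijections A B"
      by (simp add: F_def bijections_def cong: bij_betw_cong)
    moreover have "F f ` S = \<sigma> ` f ` S"
      using assms(3) by (auto simp: F_def)
    ultimately show ?thesis
      using f \<sigma>(2) by simp
  qed
  moreover have "inj_on F (bijections A B)"
  proof (rule inj_onI)
    fix f g assume fg: "f \<in> bijections A B" "g \<in> bijections A B" "F f = F g"
    show "f = g"
    proof (rule extensionalityI)
      fix x assume x: "x \<in> A"
      then have "\<sigma> (f x) = \<sigma> (g x)"
        using fun_cong[OF fg(3), of x] by (simp add: F_def)
      moreover have "f x \<in> B" "g x \<in> B"
        using fg(1,2) x by (auto simp: bijections_def bij_betw_def)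
      ultimately show "f x = g x"
        using \<sigma>(1) by (auto simp: bij_betw_def inj_on_def)
    qed (use fg in \<open>auto simp: bijections_def\<close>)
  qed
  then have "inj_on F {f \<in> bijections A B. f ` S = U}"
    by (rule inj_on_subset) blast
  moreover have "finite {f \<in> bijections A B. f ` S = U'}"
    using finite_bijections[OF assms(1,2)] by simp
  ultimately show ?thesis
    by (intro card_inj_on_le) blast+
qed

lemma card_bijections_image_eq:
  assumes "finite A" "finite B" "S \<subseteq> A" "U \<subseteq> B" "U' \<subseteq> B" "card U = card U'"
  shows "card {f \<in> bijections A B. f ` S = U} = card {f \<in> bijections A B. f ` S = U'}"
  using card_bijections_image_le[OF assms] card_bijections_image_le[OF assms(1-3,5,4) assms(6)[symmetric]]
  by (rule antisym)

lemma card_bijections_image_subset: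
  assumes "finite A" "finite B" "S \<subseteq> A" "T \<subseteq> B"
  shows "card {f \<in> bijections A B. f ` S \<subseteq> T} * (card B choose card S)
       = (card T choose card S) * card (bijections A B)"
proof -
  define s where "s = card S"
  define subsets where "subsets X = {U. U \<subseteq> X \<and> card U = s}" for X :: "'b set"
  define fiber where "fiber U = {f \<in> bijections A B. f ` S = U}" for U
  \<comment> \<open>If B has no subset of size s, then c is junk, but then both sides below vanish.\<close>
  define c where "c = card (fiber (SOME U. U \<in> subsets B))"
  have fiber_card: "card (fiber U) = c" if U: "U \<in> subsets B" for U
  proof -
    have "(SOME U. U \<in> subsets B) \<in> subsets B"
      using U by (rule someI)
    then show ?thesis
      using card_bijections_image_eq[OF assms(1-3)] U by (simp add: c_def fiber_def subsets_def)
  qed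
  have count: "card {f \<in> bijections A B. f ` S \<subseteq> X} = (card X choose s) * c" if X: "X \<subseteq> B" for X
  proof -
    have finite_X: "finite X"
      using X assms(2) finite_subset by blast
    have "{f \<in> bijections A B. f ` S \<subseteq> X} = (\<Union>U\<in>subsets X. fiber U)"
      using card_image_bijection[OF _ assms(3)] by (auto simp: subsets_def fiber_def s_def)
    also have "card \<dots> = (\<Sum>U\<in>subsets X. card (fiber U))"
      using finite_X finite_bijections[OF assms(1,2)]
      by (intro card_UN_disjoint) (auto simp: subsets_def fiber_def)
    also have "\<dots> = (\<Sum>U\<in>subsets X. c)"
      using X by (intro sum.cong refl fiber_card) (auto simp: subsets_def)
    also have "\<dots> = card (subsets X) * c"
      by simp
    also have "card (subsets X) = card X choose s"
      using n_subsets[OF finite_X] by (simp add: subsets_def)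
    finally show ?thesis .
  qed
  have "bijections A B = {f \<in> bijections A B. f ` S \<subseteq> B}"
    using card_image_bijection[OF _ assms(3)] by blast
  then have "card (bijections A B) = (card B choose s) * c"
    using count[of B] by simp
  then show ?thesis
    using count[OF assms(4)] by (simp add: s_def)
qed

lemma prob_random_bijection_image_subset_le:
  assumes "finite A" "finite B" "card A = card B" "S \<subseteq> A" "T \<subseteq> B"
  shows "measure_pmf.prob (pmf_of_set (bijections A B)) {f. f ` S \<subseteq> T}
       \<le> (real (card T) / real (card B)) ^ card S"
proof -
  have S_le: "card S \<le> card B"
    using card_mono[OF assms(1,4)] assms(3) by simp
  have T_le: "card T \<le> card B"
    using card_mono[OF assms(2,5)] .
  have "measure_pmf.prob (pmf_of_set (bijections A B)) {f. f ` S \<subseteq> T}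
      = real (card {f \<in> bijections A B. f ` S \<subseteq> T}) / real (card (bijections A B))"
    using finite_bijections[OF assms(1,2)] bijections_nonempty[OF assms(1-3)]
    by (simp add: measure_pmf_of_set Int_def conj_commute)
  also have "\<dots> = real (card T choose card S) / real (card B choose card S)"
    using card_bijections_image_subset[OF assms(1,2,4,5)] S_le
      finite_bijections[OF assms(1,2)] bijections_nonempty[OF assms(1-3)]
    by (simp add: field_simps flip: of_nat_mult)
  also have "\<dots> \<le> (real (card T) / real (card B)) ^ card S"
    using T_le S_le by (rule binomial_ratio_le_power)
  finally show ?thesis .
qed

lemma potentials_eq_bijections: "potentials K = bijections (grid K) {1..K^2}"
  by (auto simp: potentials_def bijections_def)

lemma finite_grid: "finite (grid K)"
  by (simp add: grid_def)

lemma card_grid: "card (grid K) = K^2"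
  by (simp add: grid_def power2_eq_square)

definition cross :: "nat \<Rightarrow> nat \<times> nat \<Rightarrow> (nat \<times> nat) set" where
  "cross K p = ({1..K} \<times> {snd p}) \<union> ({fst p} \<times> {1..K})"

lemma cross_subset_grid: "p \<in> grid K \<Longrightarrow> cross K p \<subseteq> grid K"
  by (auto simp: cross_def grid_def)

lemma card_cross:
  assumes "p \<in> grid K"
  shows "card (cross K p) = 2 * K - 1"
proof -
  have "({1..K} \<times> {snd p}) \<inter> ({fst p} \<times> {1..K}) = {p}"
    using assms by (cases p) (auto simp: grid_def)
  then have "card (cross K p) + 1 = K + K"
    using card_Un_Int[of "{1..K} \<times> {snd p}" "{fst p} \<times> {1..K}"]
    by (simp add: cross_def card_cartesian_product)
  then show ?thesis by simp
qed

lemma is_PNE_iff_cross: "is_PNE K \<Psi> p \<longleftrightarrow> p \<in> grid K \<and> (\<forall>q\<in>cross K p. \<Psi> p \<le> \<Psi> q)"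
  by (auto simp: is_PNE_def cross_def)

lemma ex_PNE:
  assumes "K > 0"
  shows "\<exists>p. is_PNE K \<Psi> p"
proof -
  have "(1, 1) \<in> grid K"
    using assms by (simp add: grid_def)
  then obtain p where p: "p \<in> grid K" "\<forall>q\<in>grid K. \<Psi> p \<le> \<Psi> q"
    using ex_has_least_nat[of "\<lambda>p. p \<in> grid K" "(1, 1)" \<Psi>] by blast
  then have "is_PNE K \<Psi> p"
    using cross_subset_grid[OF p(1)] by (auto simp: is_PNE_iff_cross)
  then show ?thesis ..
qed

lemma ex_cross_above_max_PNE_potential:
  assumes "K > 0"
  shows "\<exists>p\<in>grid K. \<forall>q\<in>cross K p. max_PNE_potential K \<Psi> \<le> \<Psi> q"
proof -
  have "finite {p. is_PNE K \<Psi> p}"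
    by (rule finite_subset[OF _ finite_grid]) (auto simp: is_PNE_def)
  moreover have "{p. is_PNE K \<Psi> p} \<noteq> {}"
    using ex_PNE[OF assms] by blast
  ultimately have "max_PNE_potential K \<Psi> \<in> \<Psi> ` {p. is_PNE K \<Psi> p}"
    unfolding max_PNE_potential_def by (intro Max_in) auto
  then obtain p where "is_PNE K \<Psi> p" "\<Psi> p = max_PNE_potential K \<Psi>"
    by auto
  then show ?thesis
    by (auto simp: is_PNE_iff_cross)
qed

lemma card_values_ge_le_exp:
  assumes "N > 0"
  shows "real (card {v \<in> {1..N}. c \<le> real v}) / real N \<le> exp (- (c - 1) / real N)"
proof (cases "{v \<in> {1..N}. c \<le> real v} = {}")
  case False
  then have c_le: "c \<le> real N"
    by auto
  have "{v \<in> {1..N}. c \<le> real v} \<subseteq> {nat \<lceil>c\<rceil>..N}"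
    by auto
  then have "card {v \<in> {1..N}. c \<le> real v} \<le> N + 1 - nat \<lceil>c\<rceil>"
    using card_mono[of "{nat \<lceil>c\<rceil>..N}"] by fastforce
  then have "real (card {v \<in> {1..N}. c \<le> real v}) \<le> real N + 1 - c"
    using c_le by linarith
  then have "real (card {v \<in> {1..N}. c \<le> real v}) / real N \<le> 1 + (- (c - 1) / real N)"
    using assms by (simp add: field_simps)
  also have "\<dots> \<le> exp (- (c - 1) / real N)"
    by (rule exp_ge_add_one_self)
  finally show ?thesis .
next
  case True
  then show ?thesis
    by (simp only: card.empty of_nat_0 div_0 exp_ge_zero)
qed

lemma random_potential_eq_pmf_of_bijections:
  "random_potential K = pmf_of_set (bijections (grid K) {1..K^2})"
  by (simp add: random_potential_def potentials_eq_bijections)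

lemma set_pmf_random_potential: "set_pmf (random_potential K) = potentials K"
proof -
  have "finite {1..K^2}" "card (grid K) = card {1..K^2}"
    by (simp_all add: card_grid)
  then have "finite (bijections (grid K) {1..K^2})" "bijections (grid K) {1..K^2} \<noteq> {}"
    using bijections_nonempty[OF finite_grid] finite_bijections[OF finite_grid] by blast+
  then show ?thesis
    by (simp add: random_potential_eq_pmf_of_bijections potentials_eq_bijections)
qed

lemma prob_cross_values_ge_le:
  assumes "K > 0" "p \<in> grid K"
  shows "measure_pmf.prob (random_potential K) {\<Psi>. \<Psi> ` cross K p \<subseteq> {v \<in> {1..K^2}. c \<le> real v}}
       \<le> exp (- (c - 1) / real K ^ 2) ^ (2 * K - 1)"
proof -
  have "finite {1..K^2}" "card (grid K) = card {1..K^2}" "{v \<in> {1..K^2}. c \<le> real v} \<subseteq> {1..K^2}"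
    by (auto simp: card_grid)
  from prob_random_bijection_image_subset_le[OF finite_grid this(1,2) cross_subset_grid[OF assms(2)] this(3)]
  have "measure_pmf.prob (random_potential K) {\<Psi>. \<Psi> ` cross K p \<subseteq> {v \<in> {1..K^2}. c \<le> real v}}
      \<le> (real (card {v \<in> {1..K^2}. c \<le> real v}) / real (K^2)) ^ (2 * K - 1)"
    by (simp only: random_potential_eq_pmf_of_bijections card_cross[OF assms(2)] card_atLeastAtMost)
      simp
  also have "\<dots> \<le> exp (- (c - 1) / real K ^ 2) ^ (2 * K - 1)"
    using card_values_ge_le_exp[of "K^2" c] assms(1) by (intro power_mono) simp_all
  finally show ?thesis .
qed

lemma prob_max_PNE_potential_ge:
  assumes "K > 0"
  shows "measure_pmf.prob (random_potential K) {\<Psi>. c \<le> real (max_PNE_potential K \<Psi>)}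
       \<le> real K ^ 2 * exp (- (c - 1) * (2 * real K - 1) / real K ^ 2)"
proof -
  define P where "P = random_potential K"
  define bad where "bad p = {\<Psi>. \<Psi> ` cross K p \<subseteq> {v \<in> {1..K^2}. c \<le> real v}}" for p
  have "{\<Psi>. c \<le> real (max_PNE_potential K \<Psi>)} \<inter> set_pmf P \<subseteq> (\<Union>p\<in>grid K. bad p)"
  proof safe
    fix \<Psi> assume \<Psi>: "\<Psi> \<in> set_pmf P" "c \<le> real (max_PNE_potential K \<Psi>)"
    obtain p where p: "p \<in> grid K" "\<forall>q\<in>cross K p. max_PNE_potential K \<Psi> \<le> \<Psi> q"
      using ex_cross_above_max_PNE_potential[OF assms] by blast
    have "\<Psi> ` cross K p \<subseteq> {1..K^2}"
      using card_image_bijection(1) cross_subset_grid[OF p(1)] \<Psi>(1)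
      by (simp add: P_def set_pmf_random_potential potentials_eq_bijections)
    with p \<Psi>(2) show "\<Psi> \<in> (\<Union>p\<in>grid K. bad p)"
      by (force simp: bad_def)
  qed
  then have "measure_pmf.prob P {\<Psi>. c \<le> real (max_PNE_potential K \<Psi>)}
      \<le> measure_pmf.prob P (\<Union>p\<in>grid K. bad p)"
    by (metis measure_Int_set_pmf measure_pmf.finite_measure_mono sets_measure_pmf UNIV_I)
  also have "\<dots> \<le> (\<Sum>p\<in>grid K. measure_pmf.prob P (bad p))"
    by (intro measure_pmf.finite_measure_subadditive_finite) (auto simp: finite_grid)
  also have "\<dots> \<le> (\<Sum>p\<in>grid K. exp (- (c - 1) / real K ^ 2) ^ (2 * K - 1))"
    using prob_cross_values_ge_le[OF assms] by (intro sum_mono) (simp add: P_def bad_def)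
  also have "\<dots> = real K ^ 2 * exp (real (2 * K - 1) * (- (c - 1) / real K ^ 2))"
    by (simp add: card_grid flip: exp_of_nat_mult)
  also have "\<dots> = real K ^ 2 * exp (- (c - 1) * (2 * real K - 1) / real K ^ 2)"
    using assms by (simp add: of_nat_diff field_simps)
  finally show ?thesis
    by (simp add: P_def)
qed

lemma tail_exponent_ge:
  fixes x \<delta> :: real
  assumes "x \<ge> 2" "1 + \<delta> \<le> \<delta> * x"
  shows "- ((1 + \<delta>) * x * ln x - 1) * (2 * x - 1) / x ^ 2 \<le> 2 - (2 + \<delta>) * ln x"
proof -
  have "(2 + \<delta>) * x \<le> (1 + \<delta>) * (2 * x - 1)"
    using assms(2) by (simp add: algebra_simps)
  then have "(2 + \<delta>) * ln x \<le> ((1 + \<delta>) * (2 * x - 1) / x) * ln x"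
    using assms(1) by (intro mult_right_mono) (simp_all add: le_divide_eq)
  moreover have "(2 * x - 1) / x ^ 2 \<le> 2"
  proof -
    have "2 * x \<le> x * x"
      using assms by (intro mult_right_mono) auto
    then have "2 * x - 1 \<le> 2 * x ^ 2"
      unfolding power2_eq_square using assms by linarith
    then show ?thesis
      using assms by (simp add: divide_le_eq)
  qed
  moreover have "- ((1 + \<delta>) * x * ln x - 1) * (2 * x - 1) / x ^ 2
      = (2 * x - 1) / x ^ 2 - ((1 + \<delta>) * (2 * x - 1) / x) * ln x"
    using assms by (simp add: field_simps power2_eq_square)
  ultimately show ?thesis
    by linarith
qed

lemma tail_bound_tendsto_zero:
  fixes \<delta> :: real
  assumes "\<delta> > 0"
  shows "(\<lambda>K. real K ^ 2 * exp (- ((1 + \<delta>) * real K * ln (real K) - 1) * (2 * real K - 1) / real K ^ 2))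
         \<longlonglongrightarrow> 0"
proof (rule tendsto_sandwich[OF _ _ tendsto_const])
  obtain N :: nat where "(1 + \<delta>) / \<delta> \<le> real N"
    using real_arch_simple by blast
  then have N: "1 + \<delta> \<le> \<delta> * real N"
    using assms by (simp add: field_simps)
  show "\<forall>\<^sub>F K in sequentially. real K ^ 2 * exp (- ((1 + \<delta>) * real K * ln (real K) - 1) * (2 * real K - 1) / real K ^ 2)
      \<le> exp 2 * real K powr (- \<delta>)"
    using eventually_ge_at_top[of "max 2 N"]
  proof eventually_elim
    case (elim K)
    define x where "x = real K"
    have "\<delta> * real N \<le> \<delta> * x"
      using elim assms by (simp add: x_def)
    then have x: "x \<ge> 2" "1 + \<delta> \<le> \<delta> * x"
      using elim N by (simp_all add: x_def)
    have "x ^ 2 * exp (- ((1 + \<delta>) * x * ln x - 1) * (2 * x - 1) / x ^ 2)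
        \<le> x ^ 2 * exp (2 - (2 + \<delta>) * ln x)"
      using tail_exponent_ge[OF x] by (intro mult_left_mono) simp_all
    also have "exp (2 - (2 + \<delta>) * ln x) = exp 2 * (x powr (- \<delta>) / x ^ 2)"
      using x by (simp add: powr_def exp_diff exp_minus ring_distribs exp_add field_simps flip: powr_realpow)
    finally show ?case
      using x by (simp add: x_def)
  qed
  show "(\<lambda>K. exp 2 * real K powr (- \<delta>)) \<longlonglongrightarrow> 0"
    using assms by (intro tendsto_mult_right_zero tendsto_neg_powr filterlim_real_sequentially) auto
qed simp

theorem theorem4p6:
  fixes \<delta> :: real
  assumes "\<delta> > 0"
  shows "(\<lambda>K. measure_pmf.prob (random_potential K)
            {\<Psi>. real (max_PNE_potential K \<Psi>) / (real K * ln (real K)) < 1 + \<delta>})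
         \<longlonglongrightarrow> 1"
proof (rule tendsto_sandwich[OF _ _ _ tendsto_const])
  define c where "c K = (1 + \<delta>) * real K * ln (real K)" for K :: nat
  show "(\<lambda>K. 1 - real K ^ 2 * exp (- (c K - 1) * (2 * real K - 1) / real K ^ 2)) \<longlonglongrightarrow> 1"
    using tendsto_diff[OF tendsto_const tail_bound_tendsto_zero[OF assms]] by (simp add: c_def)
  show "\<forall>\<^sub>F K in sequentially. 1 - real K ^ 2 * exp (- (c K - 1) * (2 * real K - 1) / real K ^ 2)
      \<le> measure_pmf.prob (random_potential K)
            {\<Psi>. real (max_PNE_potential K \<Psi>) / (real K * ln (real K)) < 1 + \<delta>}"
    using eventually_ge_at_top[of 2]
  proof eventually_elim
    case (elim K)
    then have "0 < real K * ln (real K)"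
      by simp
    then have "{\<Psi>. real (max_PNE_potential K \<Psi>) / (real K * ln (real K)) < 1 + \<delta>}
        = UNIV - {\<Psi>. c K \<le> real (max_PNE_potential K \<Psi>)}"
      by (auto simp: c_def divide_less_eq mult.assoc)
    then show ?case
      using prob_max_PNE_potential_ge[of K "c K"] elim
        measure_pmf.prob_compl[of "{\<Psi>. c K \<le> real (max_PNE_potential K \<Psi>)}" "random_potential K"]
      by simp
  qed
qed (simp add: measure_pmf.prob_le_1)

end
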